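(* Assume the following hypothesis: there is a constant $A$ such that, for all sufficiently large $n$, every big irreducible representation $\lambda$ of $S_n$ satisfies $\left|\chi_\lambda(\pi)/d_\lambda\right| \le A^{t(\pi)} n^{-t(\pi)/2}$ for all $\pi\in S_n$. Then all big irreducible representations $\lambda$ of $S_n$ are $O(\sqrt{n})$-smooth, i.e. there is a constant $C$ such that for all sufficiently large $n$ and every big irrep $\lambda$ of $S_n$, $\sum_{\pi\in S_n}\left|\chi_\lambda(\pi)/d_\lambda\right|^4 \le C\sqrt{n}$.
   Context: An irreducible representation $\lambda$ of $S_n$ with character $\chi_\lambda$ and dimension $d_\lambda$ is called big if $d_\lambda > e^{-\sqrt{n}\log n}\sqrt{n!}$ (natural logarithm). For $\pi\in S_n$, $t(\pi)$ is the minimum number of transpositions whose product is $\pi$ (equivalently the number of non-fixed points minus the number of nontrivial cycles). *)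

theory Defs
  imports "HOL-Combinatorics.Transposition" "Jordan_Normal_Form.Matrix" Complex_Main
begin

definition Sym :: "nat \<Rightarrow> (nat \<Rightarrow> nat) set" where
  "Sym n = {p. p permutes {..<n}}"

definition tnum :: "nat \<Rightarrow> (nat \<Rightarrow> nat) \<Rightarrow> nat" where
  "tnum n p = (LEAST k. \<exists>ts :: (nat \<times> nat) list. length ts = k \<and>
      (\<forall>(a,b) \<in> set ts. a < n \<and> b < n \<and> a \<noteq> b) \<and>
      foldr (\<lambda>(a,b) f. transpose a b \<circ> f) ts id = p)"

definition mtrace :: "complex mat \<Rightarrow> complex" where
  "mtrace M = (\<Sum>i<dim_row M. M $$ (i,i))"

definition is_rep :: "nat \<Rightarrow> nat \<Rightarrow> ((nat \<Rightarrow> nat) \<Rightarrow> complex mat) \<Rightarrow> bool" where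
  "is_rep n d \<rho> \<longleftrightarrow>
     (\<forall>p \<in> Sym n. \<rho> p \<in> carrier_mat d d) \<and>
     \<rho> id = 1\<^sub>m d \<and>
     (\<forall>p \<in> Sym n. \<forall>q \<in> Sym n. \<rho> (p \<circ> q) = \<rho> p * \<rho> q)"

definition invariant_subspace :: "nat \<Rightarrow> nat \<Rightarrow> ((nat \<Rightarrow> nat) \<Rightarrow> complex mat) \<Rightarrow> complex vec set \<Rightarrow> bool" where
  "invariant_subspace n d \<rho> W \<longleftrightarrow>
     W \<subseteq> carrier_vec d \<and> 0\<^sub>v d \<in> W \<and>
     (\<forall>v \<in> W. \<forall>w \<in> W. v + w \<in> W) \<and>
     (\<forall>c. \<forall>v \<in> W. c \<cdot>\<^sub>v v \<in> W) \<and>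
     (\<forall>p \<in> Sym n. \<forall>v \<in> W. \<rho> p *\<^sub>v v \<in> W)"

definition is_irrep :: "nat \<Rightarrow> nat \<Rightarrow> ((nat \<Rightarrow> nat) \<Rightarrow> complex mat) \<Rightarrow> bool" where
  "is_irrep n d \<rho> \<longleftrightarrow> is_rep n d \<rho> \<and> d > 0 \<and>
     (\<forall>W. invariant_subspace n d \<rho> W \<longrightarrow> W = {0\<^sub>v d} \<or> W = carrier_vec d)"

definition character :: "((nat \<Rightarrow> nat) \<Rightarrow> complex mat) \<Rightarrow> (nat \<Rightarrow> nat) \<Rightarrow> complex" where
  "character \<rho> p = mtrace (\<rho> p)"

definition big :: "nat \<Rightarrow> nat \<Rightarrow> bool" where
  "big n d \<longleftrightarrow> real d > exp (- sqrt (real n) * ln (real n)) * sqrt (fact n)"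

end

theory Submission
  imports Defs "HOL-Combinatorics.Permutations"
begin

text \<open>
  Every permutation of \<open>{..<n}\<close> factors canonically as a product of transpositions
  \<open>(i j\<^sub>i)\<close>, \<open>j\<^sub>i \<le> i\<close>, by moving the largest point home first.  A transposition on the
  left changes the number of non-trivial factors by at most one, so this number is a lower
  bound for \<open>t(\<pi>)\<close>; and its generating function over \<open>S\<^sub>n\<close> is \<open>\<Prod>i<n. 1 + i y\<close>.
  Once \<open>A\<^sup>2 \<le> n\<close>, the hypothesis gives \<open>|\<chi>(\<pi>)/d|\<^sup>4 \<le> (A\<^sup>4/n\<^sup>2)\<^bsup>t(\<pi>)\<^esup>\<close>.
\<close>

primrec prod_transpositions :: "('a \<times> 'a) list \<Rightarrow> 'a \<Rightarrow> 'a" where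
  "prod_transpositions [] = id"
| "prod_transpositions (ab # ts) = transpose (fst ab) (snd ab) \<circ> prod_transpositions ts"

lemma foldr_transpose_eq_prod_transpositions:
  "foldr (\<lambda>(a,b) f. transpose a b \<circ> f) ts id = prod_transpositions ts"
  by (induction ts) (auto split: prod.split)

primrec canonical_tnum :: "nat \<Rightarrow> (nat \<Rightarrow> nat) \<Rightarrow> nat" where
  "canonical_tnum 0 p = 0"
| "canonical_tnum (Suc n) p =
     (if p n = n then 0 else 1) + canonical_tnum n (transpose n (p n) \<circ> p)"

lemma canonical_tnum_id [simp]: "canonical_tnum n id = 0"
  by (induction n) auto

text \<open>
  A transposition on the left can be pushed past the top canonical factor \<open>(n j)\<close>: it
  leaves behind a transposition of smaller points and does not change whether the top factor
  is trivial, or it is absorbed completely (\<open>a' = b'\<close>).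
\<close>

lemma transpose_strip_transpose:
  "\<exists>a' b'. transpose n (transpose a b j) \<circ> transpose a b = transpose a' b' \<circ> transpose n j \<and>
     ((transpose a b j = n \<longleftrightarrow> j = n) \<or> a' = b')"
proof (cases "n = a \<or> n = b")
  case False
  then have "n \<noteq> a" "n \<noteq> b" by auto
  then have "transpose n (transpose a b j) \<circ> transpose a b = transpose a b \<circ> transpose n j"
    by (intro ext) (simp add: transpose_def)
  moreover have "transpose a b j = n \<longleftrightarrow> j = n"
    using \<open>n \<noteq> a\<close> \<open>n \<noteq> b\<close> by (auto simp: transpose_eq_iff)
  ultimately show ?thesis by blast
next
  case True
  then obtain c where c: "transpose a b = transpose n c"
    by (metis transpose_commute)
  show ?thesis
  proof (cases "j = n \<or> j = c \<or> c = n")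
    case True
    then have "transpose n (transpose n c j) \<circ> transpose n c = transpose n n \<circ> transpose n j"
      by (intro ext) (auto simp: transpose_def)
    then show ?thesis unfolding c by blast
  next
    case False
    then have "j \<noteq> n" "j \<noteq> c" "c \<noteq> n" by auto
    then have "transpose n (transpose n c j) \<circ> transpose n c = transpose j c \<circ> transpose n j"
      by (auto simp: fun_eq_iff transpose_def)
    moreover have "transpose n c j \<noteq> n"
      using \<open>j \<noteq> n\<close> \<open>j \<noteq> c\<close> by simp
    ultimately show ?thesis unfolding c using \<open>j \<noteq> n\<close> by blast
  qed
qed

lemma canonical_tnum_transpose_comp_le:
  "canonical_tnum n (transpose a b \<circ> p) \<le> canonical_tnum n p + 1"
proof (induction n arbitrary: a b p)
  case 0
  show ?case by simp
next
  case (Suc n)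
  define j where "j = p n"
  define q where "q = transpose n j \<circ> p"
  obtain a' b' where
    strip: "transpose n (transpose a b j) \<circ> transpose a b = transpose a' b' \<circ> transpose n j"
    and cost: "(transpose a b j = n \<longleftrightarrow> j = n) \<or> a' = b'"
    using transpose_strip_transpose[of n a b j] by blast
  have "(transpose a b \<circ> p) n = transpose a b j"
    by (simp add: j_def)
  moreover have "transpose n (transpose a b j) \<circ> (transpose a b \<circ> p) = transpose a' b' \<circ> q"
    unfolding q_def by (simp only: comp_assoc[symmetric] strip)
  ultimately have "canonical_tnum (Suc n) (transpose a b \<circ> p)
      = (if transpose a b j = n then 0 else 1) + canonical_tnum n (transpose a' b' \<circ> q)"
    by (simp only: canonical_tnum.simps)
  also have "\<dots> \<le> (if j = n then 0 else 1) + canonical_tnum n q + 1"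
    using cost
  proof
    assume "transpose a b j = n \<longleftrightarrow> j = n"
    then show ?thesis using Suc.IH[of a' b' q] by (simp add: comp_def)
  next
    assume "a' = b'"
    then show ?thesis by simp
  qed
  also have "(if j = n then 0 else 1) + canonical_tnum n q = canonical_tnum (Suc n) p"
    by (simp only: canonical_tnum.simps j_def q_def)
  finally show ?case .
qed

lemma canonical_tnum_prod_transpositions_le:
  "canonical_tnum n (prod_transpositions ts) \<le> length ts"
proof (induction ts)
  case (Cons ab ts)
  have "canonical_tnum n (prod_transpositions (ab # ts))
      \<le> canonical_tnum n (prod_transpositions ts) + 1"
    unfolding prod_transpositions.simps by (rule canonical_tnum_transpose_comp_le)
  then show ?case using Cons.IH by (simp del: prod_transpositions.simps)
qed (simp only: prod_transpositions.simps canonical_tnum_id list.size)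

lemma permutes_lessThan_eq_prod_transpositions:
  fixes n :: nat
  assumes "p permutes {..<n}"
  shows "\<exists>ts. (\<forall>(a,b) \<in> set ts. a < n \<and> b < n \<and> a \<noteq> b) \<and> prod_transpositions ts = p"
  using assms finite_lessThan[of n]
proof (induction rule: permutes_induct)
  case id
  show ?case by (intro exI[of _ "[]"]) simp
next
  case (swap a b p)
  then obtain ts where
    "\<forall>(a,b) \<in> set ts. a < n \<and> b < n \<and> a \<noteq> b" "prod_transpositions ts = p"
    by blast
  with swap.hyps show ?case by (intro exI[of _ "(a, b) # ts"]) auto
qed

lemma canonical_tnum_le_tnum:
  assumes "p \<in> Sym n"
  shows "canonical_tnum n p \<le> tnum n p"
proof -
  have "\<exists>k ts. length ts = k \<and>
      (\<forall>(a,b) \<in> set ts. a < n \<and> b < n \<and> a \<noteq> b) \<and> prod_transpositions ts = p"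
    using assms permutes_lessThan_eq_prod_transpositions by (auto simp: Sym_def)
  from LeastI_ex[OF this] obtain ts where "length ts = tnum n p" "prod_transpositions ts = p"
    unfolding tnum_def foldr_transpose_eq_prod_transpositions by blast
  then show ?thesis
    using canonical_tnum_prod_transpositions_le[of n ts] by simp
qed

lemma canonical_tnum_Suc_transpose_comp:
  assumes "s permutes {..<n}"
  shows "canonical_tnum (Suc n) (transpose n j \<circ> s) = (if j = n then 0 else 1) + canonical_tnum n s"
proof -
  have "s n = n" using assms by (simp add: permutes_def)
  then have "(transpose n j \<circ> s) n = j" by simp
  moreover have "transpose n j \<circ> (transpose n j \<circ> s) = s"
    by (simp flip: comp_assoc)
  ultimately show ?thesis by (simp only: canonical_tnum.simps)
qed

lemma sum_power_canonical_tnum: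
  fixes y :: "'a::comm_semiring_1"
  shows "(\<Sum>p\<in>Sym n. y ^ canonical_tnum n p) = (\<Prod>i<n. 1 + of_nat i * y)"
proof (induction n)
  case 0
  then show ?case by (simp add: Sym_def)
next
  case (Suc n)
  have "(\<Sum>p\<in>Sym (Suc n). y ^ canonical_tnum (Suc n) p)
      = (\<Sum>j\<in>insert n {..<n}. \<Sum>s\<in>Sym n. y ^ canonical_tnum (Suc n) (transpose n j \<circ> s))"
    unfolding Sym_def lessThan_Suc by (rule sum_over_permutations_insert) auto
  also have "\<dots> = (\<Sum>j\<in>insert n {..<n}. y ^ (if j = n then 0 else 1) * (\<Sum>s\<in>Sym n. y ^ canonical_tnum n s))"
    by (simp add: Sym_def canonical_tnum_Suc_transpose_comp power_add sum_distrib_left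
        del: canonical_tnum.simps)
  also have "\<dots> = (1 + of_nat n * y) * (\<Prod>i<n. 1 + of_nat i * y)"
    by (simp add: Suc.IH sum_distrib_right algebra_simps)
  finally show ?case by (simp add: mult.commute)
qed

lemma prod_one_plus_le_exp:
  fixes y :: real
  assumes "y \<ge> 0"
  shows "(\<Prod>i<n. 1 + real i * y) \<le> exp (real n ^ 2 * y)"
proof -
  have "(\<Prod>i<n. 1 + real i * y) \<le> (\<Prod>i<n. exp (real i * y))"
    by (intro prod_mono) (use assms in \<open>auto intro: exp_ge_add_one_self\<close>)
  also have "\<dots> = exp (\<Sum>i<n. real i * y)"
    by (simp add: exp_sum)
  also have "(\<Sum>i<n. real i * y) \<le> (\<Sum>i<n. real n * y)"
    by (intro sum_mono mult_right_mono) (use assms in auto)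
  also have "\<dots> = real n ^ 2 * y"
    by (simp add: power2_eq_square)
  finally show ?thesis by simp
qed

lemma power_mult_powr_neg_half_le:
  fixes A x :: real
  assumes "x > 0"
  shows "A ^ t * x powr (- real t / 2) \<le> (\<bar>A\<bar> / sqrt x) ^ t"
proof -
  have "x powr (- real t / 2) = inverse (x powr (real t / 2))"
    by (simp add: powr_minus)
  also have "x powr (real t / 2) = sqrt (x powr real t)"
    using assms by (intro powr_half_sqrt_powr) simp
  also have "\<dots> = sqrt x ^ t"
    using assms by (simp add: powr_realpow real_sqrt_power)
  finally have "A ^ t * x powr (- real t / 2) = A ^ t / sqrt x ^ t"
    by (simp only: divide_inverse)
  also have "\<dots> \<le> \<bar>A\<bar> ^ t / sqrt x ^ t"
    using assms by (intro divide_right_mono) (simp_all flip: power_abs)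
  also have "\<dots> = (\<bar>A\<bar> / sqrt x) ^ t"
    by (rule power_divide[symmetric])
  finally show ?thesis .
qed

lemma sum_power_le_exp_of_tnum_bound:
  fixes c :: "(nat \<Rightarrow> nat) \<Rightarrow> real" and q :: real
  assumes c: "\<And>p. p \<in> Sym n \<Longrightarrow> 0 \<le> c p \<and> c p \<le> q ^ tnum n p" and "0 \<le> q" "q \<le> 1"
  shows "(\<Sum>p\<in>Sym n. c p ^ k) \<le> exp (real n ^ 2 * q ^ k)"
proof -
  have "c p ^ k \<le> (q ^ k) ^ canonical_tnum n p" if "p \<in> Sym n" for p
  proof -
    have "c p ^ k \<le> (q ^ tnum n p) ^ k"
      using c[OF that] by (intro power_mono) auto
    also have "\<dots> = (q ^ k) ^ tnum n p"
      by (simp flip: power_mult add: mult.commute)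
    also have "\<dots> \<le> (q ^ k) ^ canonical_tnum n p"
      using canonical_tnum_le_tnum[OF that] \<open>0 \<le> q\<close> \<open>q \<le> 1\<close>
      by (intro power_decreasing) (auto intro: power_le_one)
    finally show ?thesis .
  qed
  then have "(\<Sum>p\<in>Sym n. c p ^ k) \<le> (\<Sum>p\<in>Sym n. (q ^ k) ^ canonical_tnum n p)"
    by (rule sum_mono)
  also have "\<dots> = (\<Prod>i<n. 1 + real i * q ^ k)"
    by (rule sum_power_canonical_tnum)
  also have "\<dots> \<le> exp (real n ^ 2 * q ^ k)"
    using \<open>0 \<le> q\<close> by (intro prod_one_plus_le_exp) simp
  finally show ?thesis .
qed

lemma sum_fourth_power_le_exp:
  fixes c :: "(nat \<Rightarrow> nat) \<Rightarrow> real" and A :: real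
  assumes c: "\<And>p. p \<in> Sym n \<Longrightarrow>
      0 \<le> c p \<and> c p \<le> A ^ tnum n p * real n powr (- real (tnum n p) / 2)"
    and "n \<ge> 1" "A\<^sup>2 \<le> real n"
  shows "(\<Sum>p\<in>Sym n. c p ^ 4) \<le> exp (A ^ 4)"
proof -
  define q where "q = \<bar>A\<bar> / sqrt (real n)"
  have "0 \<le> q" "q \<le> 1"
    using assms(2,3) real_sqrt_le_mono[of "A\<^sup>2" "real n"] by (auto simp: q_def)
  have "0 \<le> c p \<and> c p \<le> q ^ tnum n p" if "p \<in> Sym n" for p
    using c[OF that] power_mult_powr_neg_half_le[of "real n" A "tnum n p"] \<open>n \<ge> 1\<close>
    by (auto simp: q_def)
  then have "(\<Sum>p\<in>Sym n. c p ^ 4) \<le> exp (real n ^ 2 * q ^ 4)"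
    using \<open>0 \<le> q\<close> \<open>q \<le> 1\<close> by (rule sum_power_le_exp_of_tnum_bound)
  also have "real n ^ 2 * q ^ 4 = A ^ 4"
    using \<open>n \<ge> 1\<close> power_mult[of "sqrt (real n)" 2 2]
    by (simp add: q_def power_divide power_even_abs)
  finally show ?thesis .
qed

theorem lemma2:
  assumes hyp: "\<exists>A::real. \<exists>N. \<forall>n\<ge>N. \<forall>d \<rho>. is_irrep n d \<rho> \<and> big n d \<longrightarrow>
      (\<forall>p \<in> Sym n. cmod (character \<rho> p / of_nat d)
          \<le> A ^ tnum n p * real n powr (- real (tnum n p) / 2))"
  shows "\<exists>C::real. \<exists>N. \<forall>n\<ge>N. \<forall>d \<rho>. is_irrep n d \<rho> \<and> big n d \<longrightarrow>
      (\<Sum>p \<in> Sym n. cmod (character \<rho> p / of_nat d) ^ 4) \<le> C * sqrt (real n)"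
proof -
  obtain A :: real and N where H: "\<forall>n\<ge>N. \<forall>d \<rho>. is_irrep n d \<rho> \<and> big n d \<longrightarrow>
      (\<forall>p \<in> Sym n. cmod (character \<rho> p / of_nat d)
          \<le> A ^ tnum n p * real n powr (- real (tnum n p) / 2))"
    using hyp by blast
  have "(\<Sum>p \<in> Sym n. cmod (character \<rho> p / of_nat d) ^ 4) \<le> exp (A ^ 4) * sqrt (real n)"
    if n: "n \<ge> max N (nat \<lceil>A\<^sup>2\<rceil> + 1)" and "is_irrep n d \<rho> \<and> big n d" for n d \<rho>
  proof -
    have "A\<^sup>2 \<le> real n"
      using n real_nat_ceiling_ge[of "A\<^sup>2"] of_nat_mono[of "nat \<lceil>A\<^sup>2\<rceil>" n] by linarith
    then have "(\<Sum>p \<in> Sym n. cmod (character \<rho> p / of_nat d) ^ 4) \<le> exp (A ^ 4)"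
      using H n that(2) by (intro sum_fourth_power_le_exp) auto
    also have "\<dots> \<le> exp (A ^ 4) * sqrt (real n)"
      using n by simp
    finally show ?thesis .
  qed
  then show ?thesis by blast
qed

end
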